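(* Let $q$ be an odd prime power, $d$ an odd positive integer, and $A\subset\mathbb F_q^d$. Let $\mathcal{ZR}(A)$ be the number of pairs $(x,y)\in A\times A$ with $\|x-y\|=0$. Let $\Omega^+(A)=\sum_{m:\ \eta(\|m\|)=1}|\widehat A(m)|^2$ and $\Omega^-(A)=\sum_{m:\ \eta(\|m\|)=-1}|\widehat A(m)|^2$ (sums over $m\in\mathbb F_q^d$). \begin{enumerate} \item If $d\equiv 3\pmod 4$ and $q\equiv 3\pmod 4$, then $$\frac{\mathcal{ZR}(A)}{2}=\frac{|A|^2}{2q}-\frac{q^{\frac{3d-1}{2}}}{2}\Omega^+(A)+\frac{q^{\frac{3d-1}{2}}}{2}\Omega^-(A).$$ \item If $d\equiv 1\pmod 4$, or $d\equiv 3\pmod 4$ and $q\equiv 1\pmod 4$, then $$\frac{\mathcal{ZR}(A)}{2}=\frac{|A|^2}{2q}+\frac{q^{\frac{3d-1}{2}}}{2}\Omega^+(A)-\frac{q^{\frac{3d-1}{2}}}{2}\Omega^-(A).$$ \end{enumerate}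
   Context: For $x\in\mathbb F_q^d$, $\|x\|=x_1^2+\cdots+x_d^2$. $\eta$ is the quadratic character of $\mathbb F_q$ with $\eta(0)=0$. $\chi$ is the canonical nontrivial additive character of $\mathbb F_q$, and for $A\subset\mathbb F_q^d$, $\widehat{A}(m)=q^{-d}\sum_{x\in A}\chi(-m\cdot x)$ is the Fourier transform of the indicator function of $A$. *)

theory Defs
  imports "HOL-Analysis.Analysis"
begin

text \<open>Finite fields are modelled by a type of class field and finite; q = CARD('a),
  p = CHAR('a), q = p^n.  Vectors in F_q^d are elements of 'a^'n with d = CARD('n).\<close>

definition ff_degree :: "'a::{field,finite} itself \<Rightarrow> nat" where
  "ff_degree T = (THE n. CHAR('a) ^ n = CARD('a))"

definition abs_trace :: "'a::{field,finite} \<Rightarrow> 'a" where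
  "abs_trace x = (\<Sum>i<ff_degree TYPE('a). x ^ (CHAR('a) ^ i))"

definition canon_chi :: "'a::{field,finite} \<Rightarrow> complex" where
  "canon_chi x = exp (2 * pi * \<i> *
     of_nat (THE k. k < CHAR('a) \<and> of_nat k = abs_trace x) / of_nat CHAR('a))"

definition qchar :: "'a::{field,finite} \<Rightarrow> int" where
  "qchar x = (if x = 0 then 0 else if (\<exists>y. y ^ 2 = x) then 1 else -1)"

definition fq_norm :: "'a::{field,finite} ^ 'n \<Rightarrow> 'a" where
  "fq_norm x = (\<Sum>i\<in>UNIV. (x $ i) ^ 2)"

definition fq_dot :: "'a::{field,finite} ^ 'n \<Rightarrow> 'a ^ 'n \<Rightarrow> 'a" where
  "fq_dot m x = (\<Sum>i\<in>UNIV. m $ i * x $ i)"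

definition fourier_set :: "('a::{field,finite} ^ 'n) set \<Rightarrow> 'a ^ 'n \<Rightarrow> complex" where
  "fourier_set A m = (\<Sum>x\<in>A. canon_chi (- fq_dot m x)) / of_nat CARD('a) ^ CARD('n)"

definition ZR :: "('a::{field,finite} ^ 'n) set \<Rightarrow> nat" where
  "ZR A = card {(x, y). x \<in> A \<and> y \<in> A \<and> fq_norm (x - y) = 0}"

definition Omega_plus :: "('a::{field,finite} ^ 'n) set \<Rightarrow> real" where
  "Omega_plus A = (\<Sum>m\<in>{m. qchar (fq_norm m) = 1}. (cmod (fourier_set A m))\<^sup>2)"

definition Omega_minus :: "('a::{field,finite} ^ 'n) set \<Rightarrow> real" where
  "Omega_minus A = (\<Sum>m\<in>{m. qchar (fq_norm m) = -1}. (cmod (fourier_set A m))\<^sup>2)"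

end

(*
  Writing the indicator of ||x - y|| = 0 as q^-1 * sum_s chi(s ||x - y||) gives
    q ZR(A) - |A|^2 = sum_{s <> 0} sum_{x, y in A} chi(s ||x - y||).
  For s <> 0 the Fourier transform of w |-> chi(s ||w||) factors over the coordinates into
  quadratic Gauss sums: it is (eta(s) G)^d chi(-||m|| / (4 s)), where G = sum_t eta(t) chi(t).
  So every inner sum is a weighted sum of the |hat A(m)|^2, and summing the weights over s yields a
  second Gauss sum eta(-||m|| / 4) G.  Since d is odd, eta(s)^d = eta(s), and altogether
    q^d (q ZR(A) - |A|^2) = G^(d+1) eta(-1) q^(2d) sum_m eta(||m||) |hat A(m)|^2.
  Finally G^2 = eta(-1) q, and Euler's criterion eta(-1) = (-1)^((q-1)/2) fixes the sign.
*)
theory Submission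
  imports Defs "HOL-Computational_Algebra.Polynomial" "HOL-Number_Theory.Residues" "HOL-Algebra.Sylow"
begin

section \<open>Finite fields\<close>

lemma poly_roots_eq_if_degree_le_card:
  fixes P :: "'a::idom poly"
  assumes "P \<noteq> 0" and "S \<subseteq> {z. poly P z = 0}" and "degree P \<le> card S"
  shows "{z. poly P z = 0} = S"
proof -
  have fin: "finite {z. poly P z = 0}"
    using poly_roots_finite[OF assms(1)] .
  have "card {z. poly P z = 0} \<le> card S"
    using card_poly_roots_bound[OF assms(1)] assms(3) by linarith
  then show ?thesis
    using card_mono[OF fin assms(2)] by (intro card_subset_eq[OF fin assms(2), symmetric]) simp
qed

lemma prime_CHAR_field: "prime CHAR('a::{field,finite})"
  using finite_imp_CHAR_pos[where ?'a = 'a] by (intro prime_CHAR_semidom) simp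

lemma power_card_minus_one_eq_1:
  fixes x :: "'a::{field,finite}"
  assumes "x \<noteq> 0"
  shows "x ^ (CARD('a) - 1) = 1"
proof -
  define M :: "'a monoid" where "M = \<lparr>carrier = UNIV - {0::'a}, monoid.mult = (*), one = 1\<rparr>"
  interpret group M
  proof (rule groupI)
    fix y assume "y \<in> carrier M"
    then show "\<exists>z\<in>carrier M. z \<otimes>\<^bsub>M\<^esub> y = \<one>\<^bsub>M\<^esub>"
      by (intro bexI[of _ "inverse y"]) (auto simp: M_def)
  qed (auto simp: M_def mult.assoc)
  have "x [^]\<^bsub>M\<^esub> n = x ^ n" for n :: nat
    by (induction n) (simp_all add: M_def mult.commute)
  moreover have "order M = CARD('a) - 1"
    by (simp add: order_def M_def card_Diff_singleton)
  ultimately show ?thesis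
    using pow_order_eq_1[of x] assms by (simp add: M_def)
qed

lemma power_card_field: "(x::'a::{field,finite}) ^ CARD('a) = x"
proof (cases "x = 0")
  case False
  have "x ^ CARD('a) = x * x ^ (CARD('a) - 1)"
    by (simp flip: power_Suc)
  then show ?thesis
    using power_card_minus_one_eq_1[OF False] by simp
qed simp

text \<open>Cauchy's theorem (here via Sylow) gives \<open>x \<noteq> 0\<close> with \<open>r \<cdot> x = 0\<close> in the additive group,
  so \<open>r = 0\<close> in the field.\<close>
lemma prime_dvd_card_field_imp_eq_CHAR:
  assumes "prime r" and "r dvd CARD('a::{field,finite})"
  shows "r = CHAR('a)"
proof -
  define G :: "'a monoid" where "G = \<lparr>carrier = UNIV :: 'a set, monoid.mult = (+), one = 0\<rparr>"
  interpret group G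
  proof (rule groupI)
    fix y assume "y \<in> carrier G"
    then show "\<exists>z\<in>carrier G. z \<otimes>\<^bsub>G\<^esub> y = \<one>\<^bsub>G\<^esub>"
      by (intro bexI[of _ "- y"]) (auto simp: G_def)
  qed (auto simp: G_def add.assoc)
  obtain m where "CARD('a) = r * m"
    using assms(2) by blast
  then obtain H where H: "subgroup H G" "card H = r"
    using sylow_thm[of r G 1 m] assms(1) is_group by (auto simp: G_def order_def)
  interpret H: group "G\<lparr>carrier := H\<rparr>"
    using H(1) is_group by (rule subgroup.subgroup_is_group)
  have "0 \<in> H"
    using subgroup.one_closed[OF H(1)] by (simp add: G_def)
  moreover have "\<not> card H \<le> 1"
    using H(2) prime_gt_1_nat[OF assms(1)] by simp
  ultimately obtain x where x: "x \<in> H" "x \<noteq> 0"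
    by (metis card_le_Suc0_iff_eq finite One_nat_def)
  have "x [^]\<^bsub>G\<lparr>carrier := H\<rparr>\<^esub> n = of_nat n * x" for n :: nat
    by (induction n) (simp_all add: G_def algebra_simps)
  then have "of_nat r * x = 0"
    using H.pow_order_eq_1[of x] x H(2) by (simp add: G_def order_def)
  then have "CHAR('a) dvd r"
    using x(2) by (simp add: of_nat_eq_0_iff_char_dvd)
  then show ?thesis
    using assms(1) prime_CHAR_field[where ?'a = 'a] by (metis primes_dvd_imp_eq)
qed

lemma CHAR_power_ff_degree: "CHAR('a::{field,finite}) ^ ff_degree TYPE('a) = CARD('a)"
proof -
  let ?p = "CHAR('a)"
  obtain m where m: "CARD('a) = ?p ^ multiplicity ?p CARD('a) * m" "\<not> ?p dvd m"
    by (rule multiplicity_decompose'[of "CARD('a)" ?p])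
      (use prime_gt_1_nat[OF prime_CHAR_field[where ?'a = 'a]] in auto)
  have "m = 1"
  proof (rule ccontr)
    assume "m \<noteq> 1"
    then obtain r where "prime r" "r dvd m"
      using prime_factor_nat by blast
    then show False
      using m prime_dvd_card_field_imp_eq_CHAR[of r] by (metis dvd_mult)
  qed
  then obtain k where k: "CARD('a) = ?p ^ k"
    using m(1) by auto
  then have "(THE n. ?p ^ n = CARD('a)) = k"
    using prime_gt_1_nat[OF prime_CHAR_field[where ?'a = 'a]] by (intro the_equality) simp_all
  then show ?thesis
    using k by (simp add: ff_degree_def)
qed

section \<open>The canonical additive character\<close>

lemma abs_trace_add: "abs_trace (x + y) = abs_trace x + abs_trace (y::'a::{field,finite})"
proof -
  have "(x + y) ^ (CHAR('a) ^ i) = x ^ (CHAR('a) ^ i) + y ^ (CHAR('a) ^ i)" for i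
    by (rule freshmans_dream') (simp_all add: prime_CHAR_field)
  then show ?thesis
    by (simp add: abs_trace_def sum.distrib)
qed

lemma abs_trace_power_CHAR: "abs_trace (x::'a::{field,finite}) ^ CHAR('a) = abs_trace x"
proof -
  let ?p = "CHAR('a)" and ?n = "ff_degree TYPE('a)"
  let ?f = "\<lambda>i. x ^ (?p ^ i)"
  have "abs_trace x ^ ?p = (\<Sum>i<?n. ?f i ^ ?p)"
    unfolding abs_trace_def by (rule freshmans_dream_sum) (simp_all add: prime_CHAR_field)
  also have "\<dots> = (\<Sum>i<?n. ?f (Suc i))"
    by (intro sum.cong refl) (simp only: power_Suc2 power_mult)
  also have "?f 0 + \<dots> = (\<Sum>i<Suc ?n. ?f i)"
    by (rule sum.lessThan_Suc_shift[symmetric])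
  also have "\<dots> = (\<Sum>i<?n. ?f i) + ?f ?n"
    by simp
  also have "?f ?n = x"
    by (simp add: CHAR_power_ff_degree power_card_field)
  finally show ?thesis
    by (simp add: abs_trace_def)
qed

lemma eq_of_nat_if_power_CHAR_eq_self:
  fixes y :: "'a::field"
  assumes p: "prime CHAR('a)" and y: "y ^ CHAR('a) = y"
  shows "\<exists>k<CHAR('a). y = of_nat k"
proof -
  let ?p = "CHAR('a)"
  define P :: "'a poly" where "P = Polynomial.monom 1 ?p - Polynomial.monom 1 1"
  have roots: "poly P z = 0 \<longleftrightarrow> z ^ ?p = z" for z
    by (simp add: P_def poly_monom)
  have "degree P = ?p"
    unfolding P_def diff_conv_add_uminus minus_monom using prime_gt_1_nat[OF p]
    by (subst degree_add_eq_left) (auto simp: degree_monom_eq)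
  then have "P \<noteq> 0"
    using prime_gt_1_nat[OF p] by auto
  have "(of_nat k :: 'a) ^ ?p = of_nat k" for k
    using freshmans_dream_sum[OF p refl, of "\<lambda>_. 1" "{..<k}"] by simp
  then have "of_nat ` {..<?p} \<subseteq> {z. poly P z = 0}"
    using roots by auto
  moreover have "card (of_nat ` {..<?p} :: 'a set) = ?p"
    by (subst card_image) (auto simp: inj_on_def of_nat_eq_iff_cong_CHAR cong_def)
  ultimately have "{z. poly P z = 0} = of_nat ` {..<?p}"
    using \<open>P \<noteq> 0\<close> \<open>degree P = ?p\<close> by (intro poly_roots_eq_if_degree_le_card) simp_all
  then show ?thesis
    using y roots by auto
qed

lemma abs_trace_eq_of_nat: "\<exists>k<CHAR('a). abs_trace (x::'a::{field,finite}) = of_nat k"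
  by (rule eq_of_nat_if_power_CHAR_eq_self[OF prime_CHAR_field abs_trace_power_CHAR])

text \<open>\<open>abs_trace\<close> is a nonzero polynomial function of degree \<open>p ^ (n - 1) < q\<close>.\<close>
lemma abs_trace_not_identically_zero: "\<exists>x::'a::{field,finite}. abs_trace x \<noteq> 0"
proof (rule ccontr)
  assume "\<not> ?thesis"
  then have zero: "abs_trace x = 0" for x :: 'a
    by blast
  let ?p = "CHAR('a)" and ?n = "ff_degree TYPE('a)"
  have p: "?p > 1"
    using prime_gt_1_nat[OF prime_CHAR_field[where ?'a = 'a]] .
  have "card {0::'a, 1} \<le> CARD('a)"
    by (rule card_mono) simp_all
  have "?n \<noteq> 0"
  proof
    assume "?n = 0"
    then have "CARD('a) = 1"
      using CHAR_power_ff_degree[where ?'a = 'a] by simp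
    then show False
      using \<open>card {0::'a, 1} \<le> CARD('a)\<close> by simp
  qed
  then obtain m where n: "?n = Suc m"
    using not0_implies_Suc by blast
  define P :: "'a poly" where "P = (\<Sum>i<?n. Polynomial.monom 1 (?p ^ i))"
  have "Polynomial.coeff P (?p ^ m) = (\<Sum>i<?n. if i = m then 1 else 0)"
    using p by (simp add: P_def coeff_sum)
  then have "P \<noteq> 0"
    using n by auto
  have "degree P \<le> ?p ^ m"
    unfolding P_def
  proof (rule degree_sum_le)
    fix i assume "i \<in> {..<?n}"
    then have "?p ^ i \<le> ?p ^ m"
      using n p by (simp add: power_increasing)
    then show "degree (Polynomial.monom (1::'a) (?p ^ i)) \<le> ?p ^ m"
      using degree_monom_le order_trans by blast
  qed simp
  moreover have "{x. poly P x = 0} = UNIV"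
    using zero by (simp add: P_def poly_sum poly_monom abs_trace_def)
  then have "CARD('a) \<le> degree P"
    using card_poly_roots_bound[OF \<open>P \<noteq> 0\<close>] by simp
  moreover have "?p ^ m < CARD('a)"
    using CHAR_power_ff_degree[where ?'a = 'a] n p by (metis lessI power_strict_increasing)
  ultimately show False
    by linarith
qed

lemma canon_chi_eq_root_of_unity:
  assumes "of_nat k = abs_trace (x::'a::{field,finite})"
  shows "canon_chi x = exp (2 * pi * \<i> * of_nat k / of_nat CHAR('a))"
proof -
  let ?p = "CHAR('a)"
  obtain j where j: "j < ?p" "abs_trace x = of_nat j"
    using abs_trace_eq_of_nat by blast
  have "(THE j. j < ?p \<and> of_nat j = abs_trace x) = j"
    using j by (intro the_equality) (auto simp: of_nat_eq_iff_cong_CHAR cong_def)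
  moreover have "j mod ?p = k mod ?p"
    using j assms by (simp add: of_nat_eq_iff_cong_CHAR cong_def)
  ultimately show ?thesis
    using complex_root_unity_eq[of ?p j k] prime_gt_1_nat[OF prime_CHAR_field[where ?'a = 'a]]
    by (simp add: canon_chi_def)
qed

lemma canon_chi_add: "canon_chi (x + y) = canon_chi x * canon_chi (y::'a::{field,finite})"
proof -
  obtain a b where "abs_trace x = of_nat a" "abs_trace y = of_nat b"
    using abs_trace_eq_of_nat by metis
  then have "canon_chi (x + y) = exp (2 * pi * \<i> * of_nat (a + b) / of_nat CHAR('a))"
    by (intro canon_chi_eq_root_of_unity) (simp add: abs_trace_add)
  also have "\<dots> = exp (2 * pi * \<i> * of_nat a / of_nat CHAR('a))
      * exp (2 * pi * \<i> * of_nat b / of_nat CHAR('a))"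
    by (simp add: add_divide_distrib distrib_left flip: exp_add)
  finally show ?thesis
    using canon_chi_eq_root_of_unity \<open>abs_trace x = _\<close> \<open>abs_trace y = _\<close> by metis
qed

lemma norm_canon_chi: "cmod (canon_chi x) = 1"
  by (simp add: canon_chi_def)

lemma canon_chi_nontrivial: "\<exists>x::'a::{field,finite}. canon_chi x \<noteq> 1"
proof -
  let ?p = "CHAR('a)"
  obtain x :: 'a where x: "abs_trace x \<noteq> 0"
    using abs_trace_not_identically_zero by blast
  then obtain k where k: "k < ?p" "abs_trace x = of_nat k" "k \<noteq> 0"
    using abs_trace_eq_of_nat by fastforce
  have "canon_chi x \<noteq> exp (2 * pi * \<i> * of_nat 0 / of_nat ?p)"
    using canon_chi_eq_root_of_unity[OF k(2)[symmetric]] complex_root_unity_eq[of ?p k 0] k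
    by simp
  then show ?thesis
    by auto
qed

section \<open>The quadratic character\<close>

lemma of_int_inj_on_signs:
  assumes "(2::'a::ring_1) \<noteq> 0"
  shows "inj_on (of_int :: int \<Rightarrow> 'a) {-1, 0, 1}"
proof -
  have "(1::'a) \<noteq> -1"
    using assms by (metis eq_neg_iff_add_eq_0 one_add_one)
  then have "(-1::'a) \<noteq> 1"
    by metis
  with \<open>(1::'a) \<noteq> -1\<close> show ?thesis
    by (auto simp: inj_on_def)
qed

lemma qchar_cases: "qchar x \<in> {-1, 0, 1}"
  by (simp add: qchar_def)

lemma qchar_0 [simp]: "qchar 0 = 0"
  by (simp add: qchar_def)

lemma qchar_square: "(y::'a::{field,finite}) \<noteq> 0 \<Longrightarrow> qchar (y ^ 2) = 1"
  by (auto simp: qchar_def)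

lemma qchar_inverse: "qchar (inverse (x::'a::{field,finite})) = qchar x"
proof -
  have "(\<exists>y. y ^ 2 = inverse x) \<longleftrightarrow> (\<exists>y. y ^ 2 = x)"
    by (metis inverse_inverse_eq power_inverse)
  then show ?thesis
    by (simp add: qchar_def)
qed

lemma card_square_roots:
  assumes two: "(2::'a::{field,finite}) \<noteq> 0"
  shows "int (card {z::'a. z ^ 2 = t}) = 1 + qchar t"
proof -
  consider "t = 0" | "t \<noteq> 0" "\<exists>y. y ^ 2 = t" | "\<nexists>y. y ^ 2 = t"
    by blast
  then show ?thesis
  proof cases
    case 1
    then have "{z::'a. z ^ 2 = t} = {0}"
      by auto
    then show ?thesis
      using 1 by (simp add: qchar_def)
  next
    case 2
    then obtain y where y: "y ^ 2 = t" "y \<noteq> 0"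
      by auto
    have "{z. z ^ 2 = t} = {y, - y}"
      using power2_eq_iff[of _ y] y(1) by auto
    moreover have "y \<noteq> - y"
    proof
      assume "y = - y"
      then have "y + y = 0"
        by (metis add.right_inverse)
      then show False
        using two y(2) by (simp flip: mult_2)
    qed
    ultimately show ?thesis
      using 2 by (simp add: qchar_def)
  next
    case 3
    then have "t \<noteq> 0"
      by (metis zero_power2)
    then show ?thesis
      using 3 by (simp add: qchar_def)
  qed
qed

lemma sum_qchar:
  assumes two: "(2::'a::{field,finite}) \<noteq> 0"
  shows "(\<Sum>t::'a\<in>UNIV. qchar t) = 0"
proof -
  have "card (\<Union>t\<in>UNIV. {z::'a. z ^ 2 = t}) = (\<Sum>t\<in>UNIV. card {z::'a. z ^ 2 = t})"
    by (rule card_UN_disjoint) auto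
  moreover have "(\<Union>t\<in>UNIV. {z::'a. z ^ 2 = t}) = UNIV"
    by auto
  ultimately have "int CARD('a) = (\<Sum>t\<in>UNIV. int (card {z::'a. z ^ 2 = t}))"
    by simp
  also have "\<dots> = (\<Sum>t::'a\<in>UNIV. 1 + qchar t)"
    using card_square_roots[OF two] by simp
  also have "\<dots> = int CARD('a) + (\<Sum>t::'a\<in>UNIV. qchar t)"
    by (simp add: sum.distrib)
  finally show ?thesis
    by simp
qed

lemma card_nonzero_squares:
  assumes two: "(2::'a::{field,finite}) \<noteq> 0"
  shows "2 * card {x::'a. x \<noteq> 0 \<and> (\<exists>y. y ^ 2 = x)} = CARD('a) - 1"
proof -
  let ?S = "{x::'a. x \<noteq> 0 \<and> (\<exists>y. y ^ 2 = x)}"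
  have "card (\<Union>t\<in>?S. {z::'a. z ^ 2 = t}) = (\<Sum>t\<in>?S. card {z::'a. z ^ 2 = t})"
    by (rule card_UN_disjoint) auto
  moreover have "(\<Union>t\<in>?S. {z::'a. z ^ 2 = t}) = UNIV - {0}"
    by auto
  ultimately have "CARD('a) - 1 = (\<Sum>t\<in>?S. card {z::'a. z ^ 2 = t})"
    by (simp add: card_Diff_singleton)
  also have "\<dots> = (\<Sum>t\<in>?S. 2)"
  proof (rule sum.cong)
    fix t assume "t \<in> ?S"
    then have "int (card {z::'a. z ^ 2 = t}) = 2"
      using card_square_roots[OF two, of t] by (auto simp: qchar_def)
    then show "card {z::'a. z ^ 2 = t} = 2"
      by simp
  qed simp
  finally show ?thesis
    by simp
qed

lemma two_neq_zero_iff_odd_card: "(2::'a::{field,finite}) \<noteq> 0 \<longleftrightarrow> odd CARD('a)"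
proof
  assume "(2::'a) \<noteq> 0"
  moreover have "CARD('a) > 0"
    by simp
  ultimately show "odd CARD('a)"
    using card_nonzero_squares[where ?'a = 'a] by presburger
next
  assume odd: "odd CARD('a)"
  show "(2::'a) \<noteq> 0"
  proof
    assume "(2::'a) = 0"
    then have "CHAR('a) dvd 2"
      using of_nat_eq_0_iff_char_dvd[of 2, where ?'a = 'a] by simp
    then have "CHAR('a) = 2"
      using prime_CHAR_field two_is_prime_nat primes_dvd_imp_eq by blast
    then show False
      using CHAR_dvd_CARD[where ?'a = 'a] odd by simp
  qed
qed

text \<open>The nonzero squares are roots of \<open>X\<^sup>k - 1\<close>, \<open>k = (q - 1) / 2\<close>, and there are \<open>k\<close> of
  them, so they are all of its roots.\<close>
lemma nonzero_square_iff_power_half_card_eq_1: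
  fixes x :: "'a::{field,finite}"
  assumes two: "(2::'a) \<noteq> 0"
  shows "x \<noteq> 0 \<and> (\<exists>y. y ^ 2 = x) \<longleftrightarrow> x ^ ((CARD('a) - 1) div 2) = 1"
proof -
  let ?k = "(CARD('a) - 1) div 2"
  let ?S = "{x::'a. x \<noteq> 0 \<and> (\<exists>y. y ^ 2 = x)}"
  have card_S: "card ?S = ?k"
    using card_nonzero_squares[OF two] by auto
  then have q: "CARD('a) - 1 = 2 * ?k"
    using card_nonzero_squares[OF two] by simp
  have "1 \<in> ?S"
    by (auto intro: exI[of _ 1])
  then have "card ?S > 0"
    by (metis card_gt_0_iff empty_iff finite)
  then have "?k > 0"
    using card_S by simp
  define P :: "'a poly" where "P = Polynomial.monom 1 ?k - 1"
  have roots: "poly P z = 0 \<longleftrightarrow> z ^ ?k = 1" for z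
    by (simp add: P_def poly_monom)
  have "degree P = ?k"
    unfolding P_def diff_conv_add_uminus using \<open>?k > 0\<close>
    by (subst degree_add_eq_left) (auto simp: degree_monom_eq)
  then have "P \<noteq> 0"
    using \<open>?k > 0\<close> by auto
  have "?S \<subseteq> {z. poly P z = 0}"
  proof
    fix x assume "x \<in> ?S"
    then obtain y where "y ^ 2 = x" "y \<noteq> 0"
      by auto
    then have "x ^ ?k = y ^ (2 * ?k)"
      by (simp add: power_mult)
    also have "\<dots> = 1"
      using power_card_minus_one_eq_1[OF \<open>y \<noteq> 0\<close>] by (metis q)
    finally show "x \<in> {z. poly P z = 0}"
      using roots by simp
  qed
  then have "{z. poly P z = 0} = ?S"
    using \<open>P \<noteq> 0\<close> \<open>degree P = ?k\<close> card_S by (intro poly_roots_eq_if_degree_le_card) simp_all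
  then show ?thesis
    using roots by blast
qed

lemma qchar_Euler_criterion:
  fixes x :: "'a::{field,finite}"
  assumes two: "(2::'a) \<noteq> 0"
  shows "of_int (qchar x) = x ^ ((CARD('a) - 1) div 2)"
proof (cases "x = 0")
  case True
  then show ?thesis
    using nonzero_square_iff_power_half_card_eq_1[OF two, of 0]
    by (simp add: power_0_left split: if_splits)
next
  case False
  have "CARD('a) - 1 = 2 * ((CARD('a) - 1) div 2)"
    using two two_neq_zero_iff_odd_card by auto
  then have "(x ^ ((CARD('a) - 1) div 2)) ^ 2 = 1"
    using power_card_minus_one_eq_1[OF False] by (metis power_mult mult.commute)
  then have "x ^ ((CARD('a) - 1) div 2) = 1 \<or> x ^ ((CARD('a) - 1) div 2) = -1"
    by (simp add: power2_eq_1_iff)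
  then show ?thesis
    using nonzero_square_iff_power_half_card_eq_1[OF two, of x] False by (auto simp: qchar_def)
qed

lemma qchar_mult:
  assumes two: "(2::'a::{field,finite}) \<noteq> 0"
  shows "qchar (x * y) = qchar x * qchar (y::'a)"
proof -
  have "(of_int (qchar (x * y)) :: 'a) = of_int (qchar x * qchar y)"
    by (simp add: qchar_Euler_criterion[OF two] power_mult_distrib)
  moreover have "qchar x * qchar y \<in> {-1, 0, 1}"
    using qchar_cases[of x] qchar_cases[of y] by auto
  ultimately show ?thesis
    using inj_onD[OF of_int_inj_on_signs[OF two] _ qchar_cases] by blast
qed

lemma qchar_minus_one:
  assumes two: "(2::'a::{field,finite}) \<noteq> 0"
  shows "qchar (-1::'a) = (if CARD('a) mod 4 = 1 then 1 else -1)"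
proof -
  have "odd CARD('a)"
    using two two_neq_zero_iff_odd_card by blast
  then have "even ((CARD('a) - 1) div 2) \<longleftrightarrow> CARD('a) mod 4 = 1"
    by presburger
  then have "(of_int (qchar (-1::'a)) :: 'a) = of_int (if CARD('a) mod 4 = 1 then 1 else -1)"
    by (simp add: qchar_Euler_criterion[OF two] minus_one_power_iff)
  then show ?thesis
    by (rule inj_onD[OF of_int_inj_on_signs[OF two] _ qchar_cases]) simp
qed

section \<open>Additive characters and Fourier sums\<close>

lemma sum_vec_prod:
  fixes f :: "'n::finite \<Rightarrow> 'a::finite \<Rightarrow> 'c::comm_semiring_1"
  shows "(\<Sum>w::'a^'n\<in>UNIV. \<Prod>i\<in>UNIV. f i (w $ i)) = (\<Prod>i\<in>UNIV. \<Sum>t\<in>UNIV. f i t)"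
proof -
  have "(\<Prod>i\<in>UNIV. \<Sum>t\<in>UNIV. f i t) = (\<Sum>g\<in>PiE UNIV (\<lambda>_. UNIV). \<Prod>i\<in>UNIV. f i (g i))"
    by (rule prod_sum_PiE) auto
  also have "\<dots> = (\<Sum>w::'a^'n\<in>UNIV. \<Prod>i\<in>UNIV. f i (w $ i))"
    by (rule sum.reindex_bij_witness[of _ vec_nth vec_lambda]) auto
  finally show ?thesis
    by simp
qed

lemma fq_dot_diff: "fq_dot m (x - y) = fq_dot m x - fq_dot m y"
  by (simp add: fq_dot_def sum_subtractf algebra_simps)

lemma fq_norm_minus_commute: "fq_norm (x - y) = fq_norm (y - x)"
  by (simp add: fq_norm_def power2_commute)

locale add_char =
  fixes ch :: "'a::{field,finite} \<Rightarrow> complex"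
  assumes ch_add: "ch (x + y) = ch x * ch y"
    and norm_ch: "cmod (ch x) = 1"
    and ch_nontrivial: "\<exists>x. ch x \<noteq> 1"
begin

lemma ch_0 [simp]: "ch 0 = 1"
proof -
  have "ch 0 * ch 0 = ch 0 * 1"
    using ch_add[of 0 0] by simp
  moreover have "ch 0 \<noteq> 0"
    using norm_ch[of 0] by auto
  ultimately show ?thesis
    by (metis mult_left_cancel)
qed

lemma ch_minus: "ch (- x) = cnj (ch x)"
proof -
  have "ch x * ch (- x) = ch x * cnj (ch x)"
    using ch_add[of x "- x"] complex_norm_square[of "ch x"] norm_ch[of x] by simp
  moreover have "ch x \<noteq> 0"
    using norm_ch[of x] by auto
  ultimately show ?thesis
    by (metis mult_left_cancel)
qed

lemma ch_sum: "ch (sum f S) = (\<Prod>i\<in>S. ch (f i))"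
  by (induction S rule: infinite_finite_induct) (auto simp: ch_add)

lemma sum_ch: "(\<Sum>u\<in>UNIV. ch u) = 0"
proof -
  obtain x0 where x0: "ch x0 \<noteq> 1"
    using ch_nontrivial by blast
  have "(\<Sum>u\<in>UNIV. ch u) = (\<Sum>u\<in>UNIV. ch (u + x0))"
    by (rule sum.reindex_bij_witness[of _ "\<lambda>u. u + x0" "\<lambda>u. u - x0"]) auto
  also have "\<dots> = ch x0 * (\<Sum>u\<in>UNIV. ch u)"
    by (simp add: ch_add sum_distrib_left mult.commute)
  finally have "(1 - ch x0) * (\<Sum>u\<in>UNIV. ch u) = 0"
    by (simp add: algebra_simps)
  then show ?thesis
    using x0 by simp
qed

lemma sum_ch_mult: "(\<Sum>t\<in>UNIV. ch (a * t)) = (if a = 0 then of_nat CARD('a) else 0)"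
proof (cases "a = 0")
  case False
  have "(\<Sum>t\<in>UNIV. ch (a * t)) = (\<Sum>u\<in>UNIV. ch u)"
    by (rule sum.reindex_bij_witness[of _ "\<lambda>u. u / a" "\<lambda>t. a * t"]) (use False in auto)
  then show ?thesis
    using False sum_ch by simp
qed simp

lemma sum_ch_dot:
  fixes v :: "'a^'n::finite"
  shows "(\<Sum>m\<in>UNIV. ch (fq_dot m v)) = (if v = 0 then of_nat CARD('a) ^ CARD('n) else 0)"
proof -
  have "(\<Sum>m\<in>UNIV. ch (fq_dot m v)) = (\<Sum>m::'a^'n\<in>UNIV. \<Prod>i\<in>UNIV. ch (m $ i * v $ i))"
    by (simp add: fq_dot_def ch_sum)
  also have "\<dots> = (\<Prod>i\<in>UNIV. \<Sum>t\<in>UNIV. ch (v $ i * t))"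
    by (subst sum_vec_prod) (simp add: mult.commute)
  also have "\<dots> = (\<Prod>i\<in>UNIV. if v $ i = 0 then of_nat CARD('a) else 0)"
    by (simp add: sum_ch_mult)
  also have "\<dots> = (if v = 0 then of_nat CARD('a) ^ CARD('n) else 0)"
    by (auto simp: vec_eq_iff)
  finally show ?thesis .
qed

text \<open>For \<open>ch = canon_chi\<close> this is \<open>q\<^sup>d\<close> times \<open>fourier_set A m\<close>.\<close>
definition fourier_sum :: "('a^'n::finite) set \<Rightarrow> 'a^'n \<Rightarrow> complex" where
  "fourier_sum A m = (\<Sum>x\<in>A. ch (- fq_dot m x))"

lemma fourier_sum_mult_cnj:
  fixes A :: "('a^'n::finite) set"
  shows "fourier_sum A m * cnj (fourier_sum A m) = (\<Sum>x\<in>A. \<Sum>y\<in>A. ch (fq_dot m (y - x)))"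
proof -
  have pair: "ch (- fq_dot m x) * ch (fq_dot m y) = ch (fq_dot m (y - x))" for x y :: "'a^'n"
    by (simp add: fq_dot_diff flip: ch_add)
  have "fourier_sum A m * cnj (fourier_sum A m) = (\<Sum>x\<in>A. ch (- fq_dot m x)) * (\<Sum>y\<in>A. ch (fq_dot m y))"
    by (simp add: fourier_sum_def flip: ch_minus)
  also have "\<dots> = (\<Sum>x\<in>A. \<Sum>y\<in>A. ch (fq_dot m (y - x)))"
    by (simp only: sum_product pair)
  finally show ?thesis .
qed

lemma convolution_fourier_sum:
  fixes A :: "('a^'n::finite) set" and f :: "'a^'n \<Rightarrow> complex"
  shows "(\<Sum>m\<in>UNIV. (\<Sum>w\<in>UNIV. f w * ch (- fq_dot m w)) * (fourier_sum A m * cnj (fourier_sum A m)))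
       = of_nat CARD('a) ^ CARD('n) * (\<Sum>x\<in>A. \<Sum>y\<in>A. f (y - x))"
    (is "?lhs = _")
proof -
  let ?g = "\<lambda>x y w m. f w * ch (fq_dot m (y - x - w))"
  have "ch (fq_dot m (y - x)) * (f w * ch (- fq_dot m w)) = ?g x y w m" for x y w m
  proof -
    have "fq_dot m (y - x - w) = fq_dot m (y - x) + - fq_dot m w"
      by (simp add: fq_dot_diff)
    then show ?thesis
      by (simp only: ch_add mult_ac)
  qed
  then have "?lhs = (\<Sum>m\<in>UNIV. \<Sum>x\<in>A. \<Sum>y\<in>A. \<Sum>w\<in>UNIV. ?g x y w m)"
    unfolding fourier_sum_mult_cnj mult.commute[of "sum _ UNIV"]
    by (simp only: sum_distrib_right) (simp only: sum_distrib_left)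
  also have "\<dots> = (\<Sum>x\<in>A. \<Sum>m\<in>UNIV. \<Sum>y\<in>A. \<Sum>w\<in>UNIV. ?g x y w m)"
    by (rule sum.swap)
  also have "\<dots> = (\<Sum>x\<in>A. \<Sum>y\<in>A. \<Sum>m\<in>UNIV. \<Sum>w\<in>UNIV. ?g x y w m)"
    by (rule sum.cong[OF refl], rule sum.swap)
  also have "\<dots> = (\<Sum>x\<in>A. \<Sum>y\<in>A. \<Sum>w\<in>UNIV. \<Sum>m\<in>UNIV. ?g x y w m)"
    by (rule sum.cong[OF refl], rule sum.cong[OF refl], rule sum.swap)
  also have "\<dots> = (\<Sum>x\<in>A. \<Sum>y\<in>A. \<Sum>w\<in>UNIV.
      if w = y - x then of_nat CARD('a) ^ CARD('n) * f w else 0)"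
    by (intro sum.cong refl) (auto simp: sum_ch_dot simp flip: sum_distrib_left)
  also have "\<dots> = of_nat CARD('a) ^ CARD('n) * (\<Sum>x\<in>A. \<Sum>y\<in>A. f (y - x))"
    by (simp add: sum_distrib_left)
  finally show ?thesis .
qed

lemma ZR_eq_sum_ch:
  fixes A :: "('a^'n::finite) set"
  shows "of_nat CARD('a) * of_nat (ZR A) = (\<Sum>s\<in>UNIV. \<Sum>x\<in>A. \<Sum>y\<in>A. ch (s * fq_norm (x - y)))"
proof -
  have "ZR A = card {p \<in> A \<times> A. fq_norm (fst p - snd p) = 0}"
    unfolding ZR_def by (rule arg_cong[where f = card]) auto
  then have "of_nat (ZR A) = (\<Sum>p\<in>A \<times> A. if fq_norm (fst p - snd p) = 0 then 1 else (0::complex))"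
    by (simp add: sum.inter_filter[symmetric])
  also have "\<dots> = (\<Sum>x\<in>A. \<Sum>y\<in>A. if fq_norm (x - y) = 0 then 1 else 0)"
    by (simp add: sum.cartesian_product case_prod_beta)
  also have "of_nat CARD('a) * \<dots> = (\<Sum>x\<in>A. \<Sum>y\<in>A. \<Sum>s\<in>UNIV. ch (fq_norm (x - y) * s))"
    unfolding sum_distrib_left by (intro sum.cong refl) (simp add: sum_ch_mult)
  also have "\<dots> = (\<Sum>x\<in>A. \<Sum>s\<in>UNIV. \<Sum>y\<in>A. ch (s * fq_norm (x - y)))"
    by (simp add: mult.commute sum.swap[of _ UNIV A])
  also have "\<dots> = (\<Sum>s\<in>UNIV. \<Sum>x\<in>A. \<Sum>y\<in>A. ch (s * fq_norm (x - y)))"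
    by (rule sum.swap)
  finally show ?thesis .
qed

end

section \<open>Gauss sums and the zero-distance count\<close>

locale odd_add_char = add_char ch for ch :: "'a::{field,finite} \<Rightarrow> complex" +
  assumes two_neq_zero: "(2::'a) \<noteq> 0"
begin

lemma of_int_qchar_mult:
  fixes x y :: 'a
  shows "(of_int (qchar (x * y)) :: complex) = of_int (qchar x) * of_int (qchar y)"
  by (simp add: qchar_mult[OF two_neq_zero])

lemma of_int_qchar_divide:
  fixes x y :: 'a
  shows "(of_int (qchar (x / y)) :: complex) = of_int (qchar x) * of_int (qchar y)"
  by (simp add: divide_inverse of_int_qchar_mult qchar_inverse)

lemma of_int_qchar_square_eq_1: "(x::'a) \<noteq> 0 \<Longrightarrow> (of_int (qchar x) :: complex) ^ 2 = 1"
  by (simp add: qchar_def)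

lemma of_int_qchar_power_odd:
  assumes "(x::'a) \<noteq> 0" and "odd k"
  shows "(of_int (qchar x) :: complex) ^ k = of_int (qchar x)"
proof -
  obtain j where "k = 2 * j + 1"
    using assms(2) by (elim oddE)
  then have "(of_int (qchar x) :: complex) ^ k = ((of_int (qchar x)) ^ 2) ^ j * of_int (qchar x)"
    by (simp only: power_mult power_add power_one_right)
  then show ?thesis
    by (simp only: of_int_qchar_square_eq_1[OF assms(1)] power_one mult_1_left)
qed

definition gauss_sum :: complex where
  "gauss_sum = (\<Sum>t\<in>UNIV. of_int (qchar t) * ch t)"

lemma sum_qchar_mult_ch_mult:
  "(\<Sum>t\<in>UNIV. of_int (qchar t) * ch (s * t)) = of_int (qchar s) * gauss_sum"
proof (cases "s = 0")
  case True
  then show ?thesis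
    using sum_qchar[OF two_neq_zero] by (simp flip: of_int_sum)
next
  case False
  have "(\<Sum>t\<in>UNIV. of_int (qchar t) * ch (s * t)) = (\<Sum>u\<in>UNIV. of_int (qchar (u / s)) * ch u)"
    by (rule sum.reindex_bij_witness[of _ "\<lambda>u. u / s" "\<lambda>t. s * t"]) (use False in auto)
  also have "\<dots> = of_int (qchar s) * gauss_sum"
    by (simp add: of_int_qchar_divide gauss_sum_def sum_distrib_left mult_ac)
  finally show ?thesis .
qed

lemma sum_ch_mult_square:
  assumes "s \<noteq> 0"
  shows "(\<Sum>z\<in>UNIV. ch (s * z ^ 2)) = of_int (qchar s) * gauss_sum"
proof -
  have "(\<Sum>z\<in>UNIV. ch (s * z ^ 2)) = (\<Sum>t\<in>UNIV. \<Sum>z\<in>{z \<in> UNIV. z ^ 2 = t}. ch (s * z ^ 2))"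
    by (rule sum.group[symmetric]) auto
  also have "\<dots> = (\<Sum>t\<in>UNIV. of_nat (card {z. z ^ 2 = t}) * ch (s * t))"
    by (intro sum.cong refl) simp
  also have "\<dots> = (\<Sum>t\<in>UNIV. of_int (1 + qchar t) * ch (s * t))"
    by (intro sum.cong refl) (metis card_square_roots[OF two_neq_zero] of_int_of_nat_eq)
  also have "\<dots> = (\<Sum>t\<in>UNIV. ch (s * t)) + (\<Sum>t\<in>UNIV. of_int (qchar t) * ch (s * t))"
    by (simp add: distrib_right sum.distrib)
  also have "\<dots> = of_int (qchar s) * gauss_sum"
    using assms by (simp add: sum_ch_mult sum_qchar_mult_ch_mult)
  finally show ?thesis .
qed

lemma sum_ch_quadratic:
  assumes s: "s \<noteq> 0"
  shows "(\<Sum>z\<in>UNIV. ch (s * z ^ 2 + b * z)) = ch (- (b ^ 2 / (4 * s))) * of_int (qchar s) * gauss_sum"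
proof -
  define c where "c = b / (2 * s)"
  have "4 * s = (2 * s) * 2" and "2 * s \<noteq> 0"
    using s two_neq_zero by simp_all
  then have "b ^ 2 / (4 * s) = s * c ^ 2"
    by (simp add: c_def power2_eq_square field_simps)
  moreover have "b = 2 * s * c"
    using \<open>2 * s \<noteq> 0\<close> by (simp add: c_def)
  ultimately have square: "s * (w - c) ^ 2 + b * (w - c) = s * w ^ 2 + - (b ^ 2 / (4 * s))" for w
    by (simp add: algebra_simps power2_eq_square)
  have "(\<Sum>z\<in>UNIV. ch (s * z ^ 2 + b * z)) = (\<Sum>w\<in>UNIV. ch (s * (w - c) ^ 2 + b * (w - c)))"
    by (rule sum.reindex_bij_witness[of _ "\<lambda>w. w - c" "\<lambda>z. z + c"]) auto
  also have "\<dots> = (\<Sum>w\<in>UNIV. ch (s * w ^ 2) * ch (- (b ^ 2 / (4 * s))))"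
    by (simp only: square ch_add)
  finally show ?thesis
    using sum_ch_mult_square[OF s] by (simp add: sum_distrib_right[symmetric] mult_ac)
qed

text \<open>Squaring and substituting \<open>b = a u\<close> reduces \<open>gauss_sum\<^sup>2\<close> to the character sums
  \<open>\<Sum>a. ch (a (1 + u))\<close>, of which only the one with \<open>u = -1\<close> survives.\<close>
lemma gauss_sum_square: "gauss_sum ^ 2 = of_int (qchar (-1::'a)) * of_nat CARD('a)"
proof -
  have inner: "(\<Sum>b\<in>UNIV. of_int (qchar a) * of_int (qchar b) * ch (a + b))
      = (\<Sum>u\<in>UNIV. of_int (qchar u) * ch (a * (1 + u)))" for a :: 'a
  proof (cases "a = 0")
    case True
    then show ?thesis
      using sum_qchar[OF two_neq_zero] by (simp flip: sum_distrib_left of_int_sum)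
  next
    case False
    have "(\<Sum>b\<in>UNIV. of_int (qchar a) * of_int (qchar b) * ch (a + b))
        = (\<Sum>u\<in>UNIV. of_int (qchar a) * of_int (qchar (a * u)) * ch (a + a * u))"
      by (rule sum.reindex_bij_witness[of _ "\<lambda>u. a * u" "\<lambda>b. b / a"]) (use False in auto)
    also have "\<dots> = (\<Sum>u\<in>UNIV. of_int (qchar u) * ch (a * (1 + u)))"
      using of_int_qchar_square_eq_1[OF False]
      by (simp add: of_int_qchar_mult algebra_simps power2_eq_square)
    finally show ?thesis .
  qed
  have "gauss_sum ^ 2 = (\<Sum>a\<in>UNIV. \<Sum>b\<in>UNIV. of_int (qchar a) * of_int (qchar b) * ch (a + b))"
    by (simp add: power2_eq_square gauss_sum_def sum_product ch_add mult_ac)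
  also have "\<dots> = (\<Sum>a\<in>UNIV. \<Sum>u\<in>UNIV. of_int (qchar u) * ch (a * (1 + u)))"
    by (simp only: inner)
  also have "\<dots> = (\<Sum>u\<in>UNIV. of_int (qchar u) * (\<Sum>a\<in>UNIV. ch ((1 + u) * a)))"
    by (subst sum.swap) (simp add: sum_distrib_left mult.commute)
  also have "\<dots> = (\<Sum>u::'a\<in>UNIV. if u = -1 then of_int (qchar u) * of_nat CARD('a) else 0)"
    by (intro sum.cong refl) (auto simp: sum_ch_mult add_eq_0_iff)
  also have "\<dots> = of_int (qchar (-1::'a)) * of_nat CARD('a)"
    by simp
  finally show ?thesis .
qed

lemma sum_qchar_mult_ch_divide:
  "(\<Sum>s\<in>UNIV. of_int (qchar s) * ch (c / s)) = of_int (qchar c) * gauss_sum"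
proof (cases "c = 0")
  case True
  then show ?thesis
    using sum_qchar[OF two_neq_zero] by (simp flip: of_int_sum)
next
  case False
  have "(\<Sum>s\<in>UNIV. of_int (qchar s) * ch (c / s)) = (\<Sum>u\<in>UNIV. of_int (qchar (c / u)) * ch u)"
    by (rule sum.reindex_bij_witness[of _ "\<lambda>u. c / u" "\<lambda>s. c / s"]) (use False in auto)
  also have "\<dots> = of_int (qchar c) * gauss_sum"
    by (simp add: of_int_qchar_divide gauss_sum_def sum_distrib_left mult_ac)
  finally show ?thesis .
qed

lemma sum_ch_norm_minus_dot:
  fixes m :: "'a^'n::finite"
  assumes s: "s \<noteq> 0"
  shows "(\<Sum>w\<in>UNIV. ch (s * fq_norm w - fq_dot m w))
       = (of_int (qchar s) * gauss_sum) ^ CARD('n) * ch (- fq_norm m / 4 / s)"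
proof -
  have "s * fq_norm w - fq_dot m w = (\<Sum>i\<in>UNIV. s * (w $ i) ^ 2 + - (m $ i) * w $ i)" for w
    by (simp add: fq_norm_def fq_dot_def sum_distrib_left sum_subtractf mult.commute)
  then have "(\<Sum>w\<in>UNIV. ch (s * fq_norm w - fq_dot m w))
      = (\<Sum>w::'a^'n\<in>UNIV. \<Prod>i\<in>UNIV. ch (s * (w $ i) ^ 2 + - (m $ i) * w $ i))"
    by (simp add: ch_sum)
  also have "\<dots> = (\<Prod>i\<in>UNIV. \<Sum>t\<in>UNIV. ch (s * t ^ 2 + - (m $ i) * t))"
    by (rule sum_vec_prod)
  also have "\<dots> = (\<Prod>i\<in>UNIV. ch (- ((- (m $ i)) ^ 2 / (4 * s))) * (of_int (qchar s) * gauss_sum))"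
    by (simp only: sum_ch_quadratic[OF s] mult.assoc)
  also have "\<dots> = ch (\<Sum>i\<in>UNIV. - ((- (m $ i)) ^ 2 / (4 * s))) * (of_int (qchar s) * gauss_sum) ^ CARD('n)"
    by (simp add: prod.distrib ch_sum)
  also have "(\<Sum>i\<in>UNIV. - ((- (m $ i)) ^ 2 / (4 * s))) = - fq_norm m / 4 / s"
    by (simp add: fq_norm_def sum_divide_distrib sum_negf)
  finally show ?thesis
    by (simp only: mult.commute)
qed

lemma sum_ch_norm_diff_eq_fourier:
  fixes A :: "('a^'n::finite) set"
  assumes s: "s \<noteq> 0" and d: "odd CARD('n)"
  shows "of_nat CARD('a) ^ CARD('n) * (\<Sum>x\<in>A. \<Sum>y\<in>A. ch (s * fq_norm (x - y)))
       = gauss_sum ^ CARD('n) * of_int (qchar s)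
         * (\<Sum>m\<in>UNIV. ch (- fq_norm m / 4 / s) * (fourier_sum A m * cnj (fourier_sum A m)))"
proof -
  have "of_nat CARD('a) ^ CARD('n) * (\<Sum>x\<in>A. \<Sum>y\<in>A. ch (s * fq_norm (x - y)))
      = of_nat CARD('a) ^ CARD('n) * (\<Sum>x\<in>A. \<Sum>y\<in>A. ch (s * fq_norm (y - x)))"
    by (simp only: fq_norm_minus_commute)
  also have "\<dots> = (\<Sum>m\<in>UNIV. (\<Sum>w\<in>UNIV. ch (s * fq_norm w) * ch (- fq_dot m w))
      * (fourier_sum A m * cnj (fourier_sum A m)))"
    by (rule convolution_fourier_sum[of "\<lambda>w. ch (s * fq_norm w)", symmetric])
  also have "\<dots> = (\<Sum>m\<in>UNIV. (of_int (qchar s) * gauss_sum) ^ CARD('n) * ch (- fq_norm m / 4 / s)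
      * (fourier_sum A m * cnj (fourier_sum A m)))"
    by (simp only: ch_add[symmetric] diff_conv_add_uminus[symmetric] sum_ch_norm_minus_dot[OF s])
  also have "\<dots> = gauss_sum ^ CARD('n) * of_int (qchar s)
      * (\<Sum>m\<in>UNIV. ch (- fq_norm m / 4 / s) * (fourier_sum A m * cnj (fourier_sum A m)))"
    by (simp only: power_mult_distrib of_int_qchar_power_odd[OF s d] sum_distrib_left mult_ac)
  finally show ?thesis .
qed

lemma of_int_qchar_neg_div_4:
  fixes x :: 'a
  shows "(of_int (qchar (- x / 4)) :: complex) = of_int (qchar (-1::'a)) * of_int (qchar x)"
proof -
  have "(4::'a) = 2 ^ 2"
    by simp
  then have "qchar (4::'a) = 1"
    using qchar_square[OF two_neq_zero] by simp
  have "(of_int (qchar (- x / 4)) :: complex) = of_int (qchar ((-1) * x / 4))"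
    by simp
  also have "\<dots> = of_int (qchar (-1::'a)) * of_int (qchar x) * of_int (qchar (4::'a))"
    by (simp only: of_int_qchar_divide of_int_qchar_mult)
  finally show ?thesis
    using \<open>qchar (4::'a) = 1\<close> by simp
qed

lemma ZR_eq_fourier_sum:
  fixes A :: "('a^'n::finite) set"
  assumes d: "odd CARD('n)"
  shows "of_nat CARD('a) ^ CARD('n) * (of_nat CARD('a) * of_nat (ZR A) - of_nat (card A) ^ 2)
       = gauss_sum ^ (CARD('n) + 1) * of_int (qchar (-1::'a))
         * (\<Sum>m\<in>UNIV. of_int (qchar (fq_norm m)) * (fourier_sum A m * cnj (fourier_sum A m)))"
proof -
  let ?T = "\<lambda>s. \<Sum>x\<in>A. \<Sum>y\<in>A. ch (s * fq_norm (x - y))"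
  let ?B = "\<lambda>m. fourier_sum A m * cnj (fourier_sum A m)"
  let ?R = "\<lambda>s. gauss_sum ^ CARD('n) * of_int (qchar s) * (\<Sum>m\<in>UNIV. ch (- fq_norm m / 4 / s) * ?B m)"
  have "of_nat CARD('a) * of_nat (ZR A) = ?T 0 + (\<Sum>s\<in>UNIV - {0}. ?T s)"
    by (simp add: ZR_eq_sum_ch sum.remove[of UNIV 0])
  moreover have "?T 0 = of_nat (card A) ^ 2"
    by (simp add: power2_eq_square)
  ultimately have "of_nat CARD('a) ^ CARD('n) * (of_nat CARD('a) * of_nat (ZR A) - of_nat (card A) ^ 2)
      = (\<Sum>s\<in>UNIV - {0}. of_nat CARD('a) ^ CARD('n) * ?T s)"
    by (simp add: sum_distrib_left)
  also have "\<dots> = (\<Sum>s\<in>UNIV - {0}. ?R s)"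
    by (intro sum.cong refl sum_ch_norm_diff_eq_fourier d) simp
  also have "\<dots> = (\<Sum>s\<in>UNIV. ?R s)"
    by (simp add: sum.remove[of UNIV 0])
  also have "\<dots> = gauss_sum ^ CARD('n)
      * (\<Sum>s\<in>UNIV. \<Sum>m\<in>UNIV. ?B m * (of_int (qchar s) * ch (- fq_norm m / 4 / s)))"
    by (simp add: sum_distrib_left mult_ac)
  also have "\<dots> = gauss_sum ^ CARD('n)
      * (\<Sum>m\<in>UNIV. ?B m * (\<Sum>s\<in>UNIV. of_int (qchar s) * ch (- fq_norm m / 4 / s)))"
    by (subst sum.swap) (simp add: sum_distrib_left)
  also have "\<dots> = gauss_sum ^ (CARD('n) + 1) * of_int (qchar (-1::'a))
      * (\<Sum>m\<in>UNIV. of_int (qchar (fq_norm m)) * ?B m)"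
    by (simp only: sum_qchar_mult_ch_divide of_int_qchar_neg_div_4) (simp add: sum_distrib_left mult_ac)
  finally show ?thesis .
qed

end

lemma Omega_plus_minus_Omega_minus:
  fixes A :: "('a::{field,finite}^'n::finite) set"
  shows "Omega_plus A - Omega_minus A
       = (\<Sum>m\<in>UNIV. real_of_int (qchar (fq_norm m)) * (cmod (fourier_set A m))\<^sup>2)"
proof -
  let ?c = "\<lambda>m. (cmod (fourier_set A m))\<^sup>2"
  have "real_of_int (qchar (fq_norm m)) * ?c m
      = (if qchar (fq_norm m) = 1 then ?c m else 0) - (if qchar (fq_norm m) = -1 then ?c m else 0)" for m
    using qchar_cases[of "fq_norm m"] by auto
  then have "(\<Sum>m\<in>UNIV. real_of_int (qchar (fq_norm m)) * ?c m)
      = (\<Sum>m\<in>UNIV. if qchar (fq_norm m) = 1 then ?c m else 0)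
        - (\<Sum>m\<in>UNIV. if qchar (fq_norm m) = -1 then ?c m else 0)"
    by (simp add: sum_subtractf)
  then show ?thesis
    using sum.inter_filter[of UNIV ?c "\<lambda>m. qchar (fq_norm m) = 1"]
      sum.inter_filter[of UNIV ?c "\<lambda>m. qchar (fq_norm m) = -1"]
    by (simp add: Omega_plus_def Omega_minus_def)
qed

lemma scaled_ZR_eq_Omega:
  fixes A :: "('a::{field,finite}^'n::finite) set"
  assumes q: "odd CARD('a)" and d: "odd CARD('n)"
  shows "real CARD('a) ^ CARD('n) * (real CARD('a) * real (ZR A) - real (card A) ^ 2)
       = (real_of_int (qchar (-1::'a)) * real CARD('a)) ^ ((CARD('n) + 1) div 2)
         * real_of_int (qchar (-1::'a)) * (real CARD('a) ^ CARD('n)) ^ 2 * (Omega_plus A - Omega_minus A)"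
proof -
  interpret odd_add_char "canon_chi :: 'a \<Rightarrow> complex"
    by unfold_locales
      (simp_all add: canon_chi_add norm_canon_chi canon_chi_nontrivial two_neq_zero_iff_odd_card q)
  let ?q = "real CARD('a)" and ?d = "CARD('n)" and ?e = "real_of_int (qchar (-1::'a))"
  have norm: "fourier_sum A m * cnj (fourier_sum A m) = of_real ((?q ^ ?d) ^ 2 * (cmod (fourier_set A m))\<^sup>2)"
    for m
  proof -
    have "fourier_sum A m = of_nat CARD('a) ^ CARD('n) * fourier_set A m"
      by (simp add: fourier_sum_def fourier_set_def)
    then show ?thesis
      by (simp add: norm_mult norm_power power_mult_distrib power2_eq_square flip: complex_norm_square)
  qed
  have "?d + 1 = 2 * ((?d + 1) div 2)"
    using d by simp
  then have "gauss_sum ^ (?d + 1) = (gauss_sum ^ 2) ^ ((?d + 1) div 2)"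
    by (metis power_mult)
  then have gauss: "gauss_sum ^ (?d + 1) = of_real ((?e * ?q) ^ ((?d + 1) div 2))"
    by (simp add: gauss_sum_square)
  have "complex_of_real (?q ^ ?d * (?q * real (ZR A) - real (card A) ^ 2))
      = of_nat CARD('a) ^ ?d * (of_nat CARD('a) * of_nat (ZR A) - of_nat (card A) ^ 2)"
    by simp
  also have "\<dots> = gauss_sum ^ (?d + 1) * of_int (qchar (-1::'a))
      * (\<Sum>m\<in>UNIV. of_int (qchar (fq_norm m)) * (fourier_sum A m * cnj (fourier_sum A m)))"
    by (rule ZR_eq_fourier_sum[OF d])
  also have "\<dots> = complex_of_real ((?e * ?q) ^ ((?d + 1) div 2) * ?e * (?q ^ ?d) ^ 2
      * (Omega_plus A - Omega_minus A))"
    by (simp only: gauss norm Omega_plus_minus_Omega_minus) (simp add: sum_distrib_left mult_ac)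
  finally show ?thesis
    by (simp only: of_real_eq_iff)
qed

lemma ZR_eq_Omega:
  fixes A :: "('a::{field,finite}^'n::finite) set"
  assumes q: "odd CARD('a)" and d: "odd CARD('n)"
  shows "real (ZR A) = real (card A) ^ 2 / real CARD('a)
       + real_of_int (qchar (-1::'a)) ^ ((CARD('n) + 3) div 2)
         * real CARD('a) ^ ((3 * CARD('n) - 1) div 2) * (Omega_plus A - Omega_minus A)"
proof -
  let ?q = "real CARD('a)" and ?d = "CARD('n)" and ?e = "real_of_int (qchar (-1::'a))"
  let ?k = "(?d + 1) div 2" and ?E = "(3 * ?d - 1) div 2"
  let ?W = "Omega_plus A - Omega_minus A"
  have "?q ^ ?d * (?q * real (ZR A) - real (card A) ^ 2) = (?e * ?q) ^ ?k * ?e * (?q ^ ?d) ^ 2 * ?W"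
    by (rule scaled_ZR_eq_Omega[OF q d])
  also have "\<dots> = ?q ^ ?d * (?e ^ (?k + 1) * ?q ^ (?k + ?d) * ?W)"
    by (simp add: power_mult_distrib power_add power2_eq_square mult_ac)
  finally have "?q * real (ZR A) - real (card A) ^ 2 = ?e ^ (?k + 1) * ?q ^ (?k + ?d) * ?W"
    by simp
  moreover have "?k + 1 = (?d + 3) div 2" and "?k + ?d = Suc ?E"
    using d by (auto elim!: oddE)
  ultimately have "?q * real (ZR A) - real (card A) ^ 2 = ?e ^ ((?d + 3) div 2) * ?q ^ Suc ?E * ?W"
    by (simp only:)
  then show ?thesis
    by (simp add: field_simps)
qed

theorem proposition3p4:
  fixes A :: "('a::{field,finite} ^ 'n) set"
  assumes "odd CARD('a)"
    and "odd CARD('n)"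
  shows "(CARD('n) mod 4 = 3 \<and> CARD('a) mod 4 = 3 \<longrightarrow>
           real (ZR A) / 2 = real (card A) ^ 2 / (2 * real CARD('a))
             - real CARD('a) ^ ((3 * CARD('n) - 1) div 2) / 2 * Omega_plus A
             + real CARD('a) ^ ((3 * CARD('n) - 1) div 2) / 2 * Omega_minus A)
       \<and> (CARD('n) mod 4 = 1 \<or> (CARD('n) mod 4 = 3 \<and> CARD('a) mod 4 = 1) \<longrightarrow>
           real (ZR A) / 2 = real (card A) ^ 2 / (2 * real CARD('a))
             + real CARD('a) ^ ((3 * CARD('n) - 1) div 2) / 2 * Omega_plus A
             - real CARD('a) ^ ((3 * CARD('n) - 1) div 2) / 2 * Omega_minus A)"
proof -
  have "qchar (-1::'a) = (if CARD('a) mod 4 = 1 then 1 else -1)"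
    using assms(1) by (intro qchar_minus_one) (simp add: two_neq_zero_iff_odd_card)
  moreover have "CARD('a) mod 4 = 1 \<or> CARD('a) mod 4 = 3" and "CARD('n) mod 4 = 1 \<or> CARD('n) mod 4 = 3"
    using assms by presburger+
  moreover have "even ((CARD('n) + 3) div 2) \<longleftrightarrow> CARD('n) mod 4 = 1"
    using assms(2) by presburger
  ultimately have sign: "real_of_int (qchar (-1::'a)) ^ ((CARD('n) + 3) div 2)
      = (if CARD('n) mod 4 = 3 \<and> CARD('a) mod 4 = 3 then -1 else 1)"
    by (auto simp: minus_one_power_iff)
  show ?thesis
    using ZR_eq_Omega[OF assms, of A] by (auto simp: sign field_simps)
qed

end
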